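(* Let $n,k,R$ be positive integers with $k<n$, and let $L=\min\{k,R\}$. The capacity (in bits per channel use) of the Coupon Collector Channel $\mathrm{CC}(n,k,R)$ is \[ \mathcal{C}_{\mathrm{CC}} \;=\; \log_2\binom{n}{k} \;-\; k^{-R}\sum_{\ell=1}^{L}\binom{k}{\ell}\genfrac{\{}{\}}{0pt}{}{R}{\ell}\,\ell!\,\log_2\binom{n-\ell}{k-\ell}, \] and this capacity is achieved by the uniform distribution on the input alphabet $\mathcal{X}$.
   Context: Let $\mathcal{M}$ be a set of $n$ distinct elements ("motifs") and $k$ an integer with $1\le k<n$. The input alphabet $\mathcal{X}$ is the set of all $k$-element subsets $\mathbf{x}\subset\mathcal{M}$, so $|\mathcal{X}|=\binom{n}{k}$. For a positive integer $R$, the Coupon Collector Channel $\mathrm{CC}(n,k,R)$ is the discrete memoryless channel which, on input $\mathbf{x}\in\mathcal{X}$, outputs $\mathbf{y}=(y_1,\dots,y_R)\in\mathcal{M}^R$ where $y_1,\dots,y_R$ are drawn independently and uniformly at random from $\mathbf{x}$ (so $P(\mathbf{y}\mid\mathbf{x})=k^{-R}$ if every $y_i\in\mathbf{x}$ and $0$ otherwise). The output alphabet $\mathcal{Y}$ is the set of $R$-tuples over $\mathcal{M}$ containing between $1$ and $L=\min\{k,R\}$ distinct elements. The capacity is $\max_{P_X} I(X;Y)$ over input distributions on $\mathcal{X}$. $\genfrac{\{}{\}}{0pt}{}{R}{\ell}=\frac{1}{\ell!}\sum_{i=0}^{\ell}(-1)^{\ell-i}\binom{\ell}{i}i^R$ denotes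 the Stirling number of the second kind. *)

theory Defs
  imports Complex_Main "HOL-Combinatorics.Stirling"
begin

definition cc_inputs :: "nat \<Rightarrow> nat \<Rightarrow> nat set set" where
  "cc_inputs n k = {x. x \<subseteq> {0..<n} \<and> card x = k}"

definition cc_outputs :: "nat \<Rightarrow> nat \<Rightarrow> nat list set" where
  "cc_outputs n R = {ys. length ys = R \<and> set ys \<subseteq> {0..<n}}"

definition cc_trans :: "nat \<Rightarrow> nat \<Rightarrow> nat set \<Rightarrow> nat list \<Rightarrow> real" where
  "cc_trans k R x ys = (if set ys \<subseteq> x then 1 / real k ^ R else 0)"

definition cc_input_dist :: "nat \<Rightarrow> nat \<Rightarrow> (nat set \<Rightarrow> real) \<Rightarrow> bool" where
  "cc_input_dist n k p \<longleftrightarrow> (\<forall>x\<in>cc_inputs n k. 0 \<le> p x) \<and> (\<Sum>x\<in>cc_inputs n k. p x) = 1"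

definition cc_out_prob :: "nat \<Rightarrow> nat \<Rightarrow> nat \<Rightarrow> (nat set \<Rightarrow> real) \<Rightarrow> nat list \<Rightarrow> real" where
  "cc_out_prob n k R p ys = (\<Sum>x\<in>cc_inputs n k. p x * cc_trans k R x ys)"

definition cc_mutual_info :: "nat \<Rightarrow> nat \<Rightarrow> nat \<Rightarrow> (nat set \<Rightarrow> real) \<Rightarrow> real" where
  "cc_mutual_info n k R p =
     (\<Sum>x\<in>cc_inputs n k. \<Sum>ys\<in>cc_outputs n R.
        if p x * cc_trans k R x ys = 0 then 0
        else p x * cc_trans k R x ys * log 2 (cc_trans k R x ys / cc_out_prob n k R p ys))"

definition cc_capacity :: "nat \<Rightarrow> nat \<Rightarrow> nat \<Rightarrow> real" where
  "cc_capacity n k R = Sup (cc_mutual_info n k R ` {p. cc_input_dist n k p})"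

definition cc_uniform :: "nat \<Rightarrow> nat \<Rightarrow> nat set \<Rightarrow> real" where
  "cc_uniform n k x = 1 / real (n choose k)"

end

theory Submission
  imports Defs
begin

text \<open>The channel is invariant under permutations of the motifs. Hence for the uniform input
the output law \<open>u\<close> gives a word \<open>y\<close> with \<open>l\<close> distinct letters the probability
\<open>C(n-l,k-l) / (C(n,k) k^R)\<close>, and grouping the \<open>k^R\<close> outputs compatible with an input \<open>x\<close>
by \<open>l\<close> (there are \<open>C(k,l) l! S(R,l)\<close> of them) shows that the relative entropy
\<open>D(W(\<cdot>|x) \<parallel> u)\<close> has the same value \<open>V\<close> for every \<open>x\<close>. For any input law \<open>p\<close> with output
law \<open>q\<close>, \<open>I(p) = \<Sum>\<^sub>x p(x) D(W(\<cdot>|x) \<parallel> u) - D(q \<parallel> u) \<le> V\<close>, so the uniform law, which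
attains \<open>V\<close>, achieves the capacity.\<close>

section \<open>Mutual information of a finite channel\<close>

definition output_prob :: "'a set \<Rightarrow> ('a \<Rightarrow> 'b \<Rightarrow> real) \<Rightarrow> ('a \<Rightarrow> real) \<Rightarrow> 'b \<Rightarrow> real" where
  "output_prob X W p y = (\<Sum>x\<in>X. p x * W x y)"

definition rel_entropy :: "'b set \<Rightarrow> ('b \<Rightarrow> real) \<Rightarrow> ('b \<Rightarrow> real) \<Rightarrow> real" where
  "rel_entropy Y P Q = (\<Sum>y\<in>Y. if P y = 0 then 0 else P y * log 2 (P y / Q y))"

definition mutual_information ::
    "'a set \<Rightarrow> 'b set \<Rightarrow> ('a \<Rightarrow> 'b \<Rightarrow> real) \<Rightarrow> ('a \<Rightarrow> real) \<Rightarrow> real" where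
  "mutual_information X Y W p =
     (\<Sum>x\<in>X. \<Sum>y\<in>Y. if p x * W x y = 0 then 0
        else p x * W x y * log 2 (W x y / output_prob X W p y))"

lemma mutual_information_eq_sum_rel_entropy:
  "mutual_information X Y W p = (\<Sum>x\<in>X. p x * rel_entropy Y (W x) (output_prob X W p))"
  unfolding mutual_information_def rel_entropy_def
  by (auto simp: sum_distrib_left intro!: sum.cong)

lemma sum_output_prob:
  assumes "finite X" "finite Y" "\<And>x. x \<in> X \<Longrightarrow> (\<Sum>y\<in>Y. W x y) = 1"
  shows "(\<Sum>y\<in>Y. output_prob X W p y) = (\<Sum>x\<in>X. p x)"
proof -
  have "(\<Sum>y\<in>Y. output_prob X W p y) = (\<Sum>x\<in>X. p x * (\<Sum>y\<in>Y. W x y))"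
    unfolding output_prob_def by (simp add: sum.swap[of _ Y] sum_distrib_left)
  then show ?thesis using assms by simp
qed

lemma log2_le_minus_one: "0 < (z::real) \<Longrightarrow> log 2 z \<le> (z - 1) / ln 2"
  unfolding log_def using ln_le_minus_one[of z] by (simp add: divide_right_mono)

lemma mutual_information_le_sum_rel_entropy:
  assumes "finite X" "finite Y"
    and p_nonneg: "\<And>x. x \<in> X \<Longrightarrow> 0 \<le> p x"
    and W_nonneg: "\<And>x y. x \<in> X \<Longrightarrow> y \<in> Y \<Longrightarrow> 0 \<le> W x y"
    and u_nonneg: "\<And>y. y \<in> Y \<Longrightarrow> 0 \<le> u y"
    and u_pos: "\<And>x y. x \<in> X \<Longrightarrow> y \<in> Y \<Longrightarrow> W x y \<noteq> 0 \<Longrightarrow> 0 < u y"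
    and mass: "(\<Sum>y\<in>Y. u y) \<le> (\<Sum>y\<in>Y. output_prob X W p y)"
  shows "mutual_information X Y W p \<le> (\<Sum>x\<in>X. p x * rel_entropy Y (W x) u)"
proof -
  define q where "q = output_prob X W p"
  have q_ge: "p x * W x y \<le> q y" if "x \<in> X" "y \<in> Y" for x y
    unfolding q_def output_prob_def
    by (rule member_le_sum) (use that assms in \<open>auto intro: mult_nonneg_nonneg\<close>)
  have swap: "(\<Sum>x\<in>X. \<Sum>y\<in>Y. p x * W x y * c y) = (\<Sum>y\<in>Y. q y * c y)"
    for c :: "'b \<Rightarrow> real"
    by (simp add: q_def output_prob_def sum.swap[of _ X] sum_distrib_right)
  \<comment> \<open>\<open>log (W/q) = log (W/u) + log (u/q)\<close>, and \<open>log z \<le> (z - 1) / ln 2\<close> bounds the second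
      term; summed over \<open>x\<close> the bound becomes \<open>(u y - q y) / ln 2\<close>, whose total is \<open>\<le> 0\<close>.\<close>
  have pointwise: "(if p x * W x y = 0 then 0 else p x * W x y * log 2 (W x y / q y))
      \<le> p x * (if W x y = 0 then 0 else W x y * log 2 (W x y / u y))
         + p x * W x y * ((u y / q y - 1) / ln 2)"
    if x: "x \<in> X" and y: "y \<in> Y" for x y
  proof (cases "p x * W x y = 0")
    case False
    then have pW: "0 < p x * W x y" using p_nonneg[OF x] W_nonneg[OF x y]
      by (simp add: less_le)
    have "W x y \<noteq> 0" using False by simp
    then have "0 < W x y" "0 < u y" using W_nonneg[OF x y] u_pos[OF x y] by simp_all
    moreover have "0 < q y" using pW q_ge[OF x y] by simp
    ultimately have "log 2 (W x y / q y) = log 2 (W x y / u y) + log 2 (u y / q y)"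
      by (simp add: log_divide)
    moreover have "p x * W x y * log 2 (u y / q y) \<le> p x * W x y * ((u y / q y - 1) / ln 2)"
      using pW \<open>0 < u y\<close> \<open>0 < q y\<close> by (intro mult_left_mono log2_le_minus_one) simp_all
    ultimately show ?thesis using False by (simp add: algebra_simps)
  qed auto
  have "mutual_information X Y W p
      \<le> (\<Sum>x\<in>X. \<Sum>y\<in>Y. p x * (if W x y = 0 then 0 else W x y * log 2 (W x y / u y))
           + p x * W x y * ((u y / q y - 1) / ln 2))"
    unfolding mutual_information_def q_def[symmetric] using pointwise by (intro sum_mono) blast
  also have "\<dots> = (\<Sum>x\<in>X. p x * rel_entropy Y (W x) u)
                  + (\<Sum>x\<in>X. \<Sum>y\<in>Y. p x * W x y * ((u y / q y - 1) / ln 2))"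
    by (simp add: rel_entropy_def sum.distrib sum_distrib_left)
  also have "(\<Sum>x\<in>X. \<Sum>y\<in>Y. p x * W x y * ((u y / q y - 1) / ln 2))
      = (\<Sum>y\<in>Y. q y * ((u y / q y - 1) / ln 2))"
    using swap .
  also have "(\<Sum>y\<in>Y. q y * ((u y / q y - 1) / ln 2)) \<le> (\<Sum>y\<in>Y. (u y - q y) / ln 2)"
    using u_nonneg by (intro sum_mono) (auto simp: field_simps)
  also have "\<dots> \<le> 0"
    using mass by (simp add: q_def sum_divide_distrib[symmetric] sum_subtractf divide_nonpos_pos)
  finally show ?thesis by simp
qed

lemma mutual_information_eq_if_rel_entropy_const:
  assumes "(\<Sum>x\<in>X. p x) = 1" "\<And>x. x \<in> X \<Longrightarrow> rel_entropy Y (W x) (output_prob X W p) = V"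
  shows "mutual_information X Y W p = V"
  using assms by (simp add: mutual_information_eq_sum_rel_entropy sum_distrib_right[symmetric])

lemma mutual_information_le_if_rel_entropy_const:
  assumes "finite X" "finite Y"
    and W_nonneg: "\<And>x y. x \<in> X \<Longrightarrow> y \<in> Y \<Longrightarrow> 0 \<le> W x y"
    and W_row: "\<And>x. x \<in> X \<Longrightarrow> (\<Sum>y\<in>Y. W x y) = 1"
    and p0_pos: "\<And>x. x \<in> X \<Longrightarrow> 0 < p0 x" and p0_sum: "(\<Sum>x\<in>X. p0 x) = 1"
    and const: "\<And>x. x \<in> X \<Longrightarrow> rel_entropy Y (W x) (output_prob X W p0) = V"
    and p_nonneg: "\<And>x. x \<in> X \<Longrightarrow> 0 \<le> p x" and p_sum: "(\<Sum>x\<in>X. p x) = 1"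
  shows "mutual_information X Y W p \<le> V"
proof -
  let ?u = "output_prob X W p0"
  have "mutual_information X Y W p \<le> (\<Sum>x\<in>X. p x * rel_entropy Y (W x) ?u)"
  proof (rule mutual_information_le_sum_rel_entropy[OF assms(1,2) p_nonneg W_nonneg])
    show "0 \<le> ?u y" if "y \<in> Y" for y
      unfolding output_prob_def using that
      by (intro sum_nonneg mult_nonneg_nonneg) (simp_all add: W_nonneg p0_pos[THEN less_imp_le])
    show "0 < ?u y" if "x \<in> X" "y \<in> Y" "W x y \<noteq> 0" for x y
    proof -
      have "p0 x * W x y \<le> ?u y"
        unfolding output_prob_def using assms(1) that
        by (intro member_le_sum mult_nonneg_nonneg) (simp_all add: W_nonneg p0_pos[THEN less_imp_le])
      moreover have "0 < p0 x * W x y"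
        using that p0_pos[of x] W_nonneg[of x y] by (simp add: less_le)
      ultimately show ?thesis by linarith
    qed
    show "(\<Sum>y\<in>Y. ?u y) \<le> (\<Sum>y\<in>Y. output_prob X W p y)"
      using sum_output_prob[OF assms(1,2) W_row] p0_sum p_sum by simp
  qed
  also have "\<dots> = V" using const p_sum by (simp add: sum_distrib_right[symmetric])
  finally show ?thesis .
qed

section \<open>Words with a prescribed set of letters\<close>

definition lists_with_set :: "nat \<Rightarrow> 'a set \<Rightarrow> 'a list set" where
  "lists_with_set R S = {ys. length ys = R \<and> set ys = S}"

lemma finite_lists_with_set: "finite S \<Longrightarrow> finite (lists_with_set R S)"
  unfolding lists_with_set_def
  by (rule finite_subset[OF _ finite_lists_length_eq[of S R]]) auto

lemma lists_with_set_Suc: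
  "lists_with_set (Suc R) S =
     (\<Union>a\<in>S. (#) a ` (lists_with_set R S \<union> lists_with_set R (S - {a})))"
proof (intro equalityI subsetI)
  fix zs assume "zs \<in> lists_with_set (Suc R) S"
  then obtain a ys where "zs = a # ys" "length ys = R" "insert a (set ys) = S"
    by (cases zs) (auto simp: lists_with_set_def)
  moreover have "set ys = S \<or> set ys = S - {a}" using calculation by auto
  ultimately show "zs \<in> (\<Union>a\<in>S. (#) a ` (lists_with_set R S \<union> lists_with_set R (S - {a})))"
    by (auto simp: lists_with_set_def)
next
  fix zs assume "zs \<in> (\<Union>a\<in>S. (#) a ` (lists_with_set R S \<union> lists_with_set R (S - {a})))"
  then obtain a ys where "a \<in> S" "zs = a # ys"
    and "ys \<in> lists_with_set R S \<union> lists_with_set R (S - {a})"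
    by blast
  then show "zs \<in> lists_with_set (Suc R) S" by (auto simp: lists_with_set_def)
qed

lemma card_lists_with_set:
  "finite S \<Longrightarrow> card (lists_with_set R S) = fact (card S) * Stirling R (card S)"
proof (induction R arbitrary: S)
  case 0
  then show ?case by (cases "card S") (auto simp: lists_with_set_def)
next
  case (Suc R)
  have "card (lists_with_set (Suc R) S)
      = (\<Sum>a\<in>S. card ((#) a ` (lists_with_set R S \<union> lists_with_set R (S - {a}))))"
    unfolding lists_with_set_Suc
  proof (rule card_UN_disjoint[OF Suc.prems])
    show "\<forall>a\<in>S. finite ((#) a ` (lists_with_set R S \<union> lists_with_set R (S - {a})))"
      using Suc.prems by (simp add: finite_lists_with_set)
  qed (auto simp: lists_with_set_def)
  also have "\<dots> = (\<Sum>a\<in>S. card (lists_with_set R S) + card (lists_with_set R (S - {a})))"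
  proof (rule sum.cong[OF refl])
    fix a assume "a \<in> S"
    then have "lists_with_set R S \<inter> lists_with_set R (S - {a}) = {}"
      by (auto simp: lists_with_set_def)
    then show "card ((#) a ` (lists_with_set R S \<union> lists_with_set R (S - {a})))
        = card (lists_with_set R S) + card (lists_with_set R (S - {a}))"
      using Suc.prems by (simp add: card_image card_Un_disjoint finite_lists_with_set)
  qed
  also have "\<dots> = card S * (fact (card S) * Stirling R (card S)
                              + fact (card S - 1) * Stirling R (card S - 1))"
    using Suc by (simp add: card_Diff_singleton)
  also have "\<dots> = fact (card S) * Stirling (Suc R) (card S)"
    using Suc.prems by (cases "card S") (simp_all add: algebra_simps)
  finally show ?case .
qed

lemma card_lists_with_card_set:
  assumes "finite A"
  shows "card {ys. set ys \<subseteq> A \<and> length ys = R \<and> card (set ys) = l}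
       = (card A choose l) * fact l * Stirling R l"
proof -
  let ?Ss = "{S. S \<subseteq> A \<and> card S = l}"
  have by_set: "{ys. set ys \<subseteq> A \<and> length ys = R \<and> card (set ys) = l}
      = (\<Union>S\<in>?Ss. lists_with_set R S)"
    by (auto simp: lists_with_set_def)
  have "card {ys. set ys \<subseteq> A \<and> length ys = R \<and> card (set ys) = l}
      = (\<Sum>S\<in>?Ss. card (lists_with_set R S))"
    unfolding by_set
  proof (rule card_UN_disjoint)
    show "finite ?Ss" using assms by (simp add: finite_subset[of _ "Pow A"])
    show "\<forall>S\<in>?Ss. finite (lists_with_set R S)"
      by (simp add: finite_lists_with_set finite_subset[OF _ assms])
  qed (auto simp: lists_with_set_def)
  also have "\<dots> = (\<Sum>S\<in>?Ss. fact l * Stirling R l)"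
  proof (rule sum.cong[OF refl])
    fix S assume "S \<in> ?Ss"
    then show "card (lists_with_set R S) = fact l * Stirling R l"
      by (simp add: card_lists_with_set finite_subset[OF _ assms])
  qed
  also have "\<dots> = (card A choose l) * fact l * Stirling R l"
    using n_subsets[OF assms, of l] by simp
  finally show ?thesis .
qed

lemma sum_lists_by_card_set:
  fixes g :: "nat \<Rightarrow> real"
  assumes "finite A"
  shows "(\<Sum>ys\<in>{ys. set ys \<subseteq> A \<and> length ys = R}. g (card (set ys)))
       = (\<Sum>l\<le>card A. real (card A choose l) * real (Stirling R l) * fact l * g l)"
proof -
  let ?Y = "{ys. set ys \<subseteq> A \<and> length ys = R}"
  have "(\<Sum>ys\<in>?Y. g (card (set ys))) = (\<Sum>l\<le>card A. \<Sum>ys\<in>{ys\<in>?Y. card (set ys) = l}. g l)"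
    using sum.group[of ?Y "{..card A}" "\<lambda>ys. card (set ys)" "\<lambda>ys. g (card (set ys))"]
      finite_lists_length_eq[OF assms] card_mono[OF assms]
    by (force intro: sum.cong)
  also have "\<dots> = (\<Sum>l\<le>card A. real (card A choose l) * real (Stirling R l) * fact l * g l)"
    using card_lists_with_card_set[OF assms] by (simp add: conj_assoc mult_ac)
  finally show ?thesis .
qed

lemma card_subsets_containing:
  assumes "finite N" "T \<subseteq> N" "card T \<le> k"
  shows "card {x. x \<subseteq> N \<and> card x = k \<and> T \<subseteq> x} = (card N - card T) choose (k - card T)"
proof -
  have "finite T" using assms rev_finite_subset by blast
  have "bij_betw (\<lambda>B. B \<union> T) {B. B \<subseteq> N - T \<and> card B = k - card T}
          {x. x \<subseteq> N \<and> card x = k \<and> T \<subseteq> x}"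
  proof (rule bij_betw_byWitness[where f' = "\<lambda>x. x - T"])
    show "(\<lambda>B. B \<union> T) ` {B. B \<subseteq> N - T \<and> card B = k - card T}
        \<subseteq> {x. x \<subseteq> N \<and> card x = k \<and> T \<subseteq> x}"
    proof (intro image_subsetI CollectI conjI)
      fix B assume B: "B \<in> {B. B \<subseteq> N - T \<and> card B = k - card T}"
      then have "finite B" using assms rev_finite_subset[of "N - T" B] by auto
      moreover have "B \<inter> T = {}" using B by blast
      ultimately show "card (B \<union> T) = k"
        using B assms \<open>finite T\<close> by (simp add: card_Un_disjoint)
    qed (use assms in auto)
    show "(\<lambda>x. x - T) ` {x. x \<subseteq> N \<and> card x = k \<and> T \<subseteq> x}
        \<subseteq> {B. B \<subseteq> N - T \<and> card B = k - card T}"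
      using assms \<open>finite T\<close> by (auto simp: card_Diff_subset rev_finite_subset[of N])
  qed auto
  then have "card {x. x \<subseteq> N \<and> card x = k \<and> T \<subseteq> x} = card (N - T) choose (k - card T)"
    using assms by (simp add: bij_betw_same_card[symmetric] n_subsets)
  then show ?thesis using assms \<open>finite T\<close> by (simp add: card_Diff_subset)
qed

lemma Stirling_0_right: "0 < R \<Longrightarrow> Stirling R 0 = 0"
  by (cases R) simp_all

section \<open>The coupon collector channel\<close>

lemma cc_out_prob_eq_output_prob: "cc_out_prob n k R = output_prob (cc_inputs n k) (cc_trans k R)"
  by (simp add: fun_eq_iff cc_out_prob_def output_prob_def)

lemma cc_mutual_info_eq_mutual_information:
  "cc_mutual_info n k R = mutual_information (cc_inputs n k) (cc_outputs n R) (cc_trans k R)"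
  by (rule ext) (simp only: cc_mutual_info_def mutual_information_def cc_out_prob_eq_output_prob)

lemma finite_cc_inputs: "finite (cc_inputs n k)"
  unfolding cc_inputs_def by (rule finite_subset[of _ "Pow {0..<n}"]) auto

lemma card_cc_inputs: "card (cc_inputs n k) = n choose k"
  unfolding cc_inputs_def using n_subsets[of "{0..<n}" k] by simp

lemma finite_cc_outputs: "finite (cc_outputs n R)"
  unfolding cc_outputs_def
  by (rule finite_subset[OF _ finite_lists_length_eq[of "{0..<n}" R]]) auto

lemma cc_input_dist_uniform: "k \<le> n \<Longrightarrow> cc_input_dist n k (cc_uniform n k)"
  by (simp add: cc_input_dist_def cc_uniform_def card_cc_inputs)

lemma cc_outputs_within:
  "x \<in> cc_inputs n k \<Longrightarrow> {ys \<in> cc_outputs n R. set ys \<subseteq> x} = {ys. set ys \<subseteq> x \<and> length ys = R}"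
  unfolding cc_inputs_def cc_outputs_def by blast

lemma sum_cc_trans:
  assumes "x \<in> cc_inputs n k" "0 < k"
  shows "(\<Sum>ys\<in>cc_outputs n R. cc_trans k R x ys) = 1"
proof -
  have "finite x" "card x = k"
    using assms(1) unfolding cc_inputs_def by (auto intro: rev_finite_subset)
  have "(\<Sum>ys\<in>cc_outputs n R. cc_trans k R x ys) = (\<Sum>ys\<in>{ys \<in> cc_outputs n R. set ys \<subseteq> x}. 1 / real k ^ R)"
    unfolding cc_trans_def by (rule sum.inter_filter[OF finite_cc_outputs, symmetric])
  also have "\<dots> = 1"
    using assms \<open>finite x\<close> \<open>card x = k\<close> by (simp add: cc_outputs_within card_lists_length_eq)
  finally show ?thesis .
qed

lemma cc_out_prob_uniform:
  assumes "ys \<in> cc_outputs n R" "card (set ys) \<le> k"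
  shows "cc_out_prob n k R (cc_uniform n k) ys
       = real ((n - card (set ys)) choose (k - card (set ys))) / (real (n choose k) * real k ^ R)"
proof -
  have "{x \<in> cc_inputs n k. set ys \<subseteq> x} = {x. x \<subseteq> {0..<n} \<and> card x = k \<and> set ys \<subseteq> x}"
    unfolding cc_inputs_def by blast
  moreover have "set ys \<subseteq> {0..<n}" using assms(1) unfolding cc_outputs_def by blast
  ultimately have count:
    "card {x \<in> cc_inputs n k. set ys \<subseteq> x} = (n - card (set ys)) choose (k - card (set ys))"
    using card_subsets_containing[of "{0..<n}" "set ys" k] assms(2) by simp
  have "cc_out_prob n k R (cc_uniform n k) ys
      = (\<Sum>x\<in>cc_inputs n k. if set ys \<subseteq> x then 1 / (real (n choose k) * real k ^ R) else 0)"
    unfolding cc_out_prob_def cc_uniform_def cc_trans_def by (intro sum.cong) auto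
  also have "\<dots> = (\<Sum>x\<in>{x \<in> cc_inputs n k. set ys \<subseteq> x}. 1 / (real (n choose k) * real k ^ R))"
    by (rule sum.inter_filter[OF finite_cc_inputs, symmetric])
  finally show ?thesis using count by simp
qed

lemma rel_entropy_cc_trans_uniform:
  assumes "0 < k" "k \<le> n" "0 < R" "x \<in> cc_inputs n k"
  shows "rel_entropy (cc_outputs n R) (cc_trans k R x) (cc_out_prob n k R (cc_uniform n k))
       = log 2 (real (n choose k))
         - (1 / real k ^ R) * (\<Sum>l=1..min k R.
              real (k choose l) * real (Stirling R l) * fact l * log 2 (real ((n - l) choose (k - l))))"
proof -
  define K where "K = real k ^ R"
  define C where "C = real (n choose k)"
  define b where "b l = real ((n - l) choose (k - l))" for l
  let ?Ys = "{ys. set ys \<subseteq> x \<and> length ys = R}"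
  have "finite x" "card x = k"
    using assms(4) unfolding cc_inputs_def by (auto intro: rev_finite_subset)
  have "0 < K" "0 < C" using assms(1,2) by (simp_all add: K_def C_def)
  have row_term: "(if cc_trans k R x ys = 0 then 0
               else cc_trans k R x ys * log 2 (cc_trans k R x ys / cc_out_prob n k R (cc_uniform n k) ys))
      = (if set ys \<subseteq> x then (log 2 C - log 2 (b (card (set ys)))) / K else 0)"
    if ys: "ys \<in> cc_outputs n R" for ys
  proof (cases "set ys \<subseteq> x")
    case True
    then have "card (set ys) \<le> k" using card_mono[OF \<open>finite x\<close>] \<open>card x = k\<close> by fastforce
    then have "0 < b (card (set ys))" using assms(2) by (simp add: b_def)
    moreover have "cc_out_prob n k R (cc_uniform n k) ys = b (card (set ys)) / (C * K)"
      using cc_out_prob_uniform[OF ys \<open>card (set ys) \<le> k\<close>] by (simp add: b_def C_def K_def)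
    ultimately show ?thesis
      using True \<open>0 < K\<close> \<open>0 < C\<close> by (simp add: cc_trans_def K_def[symmetric] log_divide)
  qed (simp add: cc_trans_def)
  have "rel_entropy (cc_outputs n R) (cc_trans k R x) (cc_out_prob n k R (cc_uniform n k))
      = (\<Sum>ys\<in>?Ys. (log 2 C - log 2 (b (card (set ys)))) / K)"
    unfolding rel_entropy_def
    by (simp add: row_term sum.inter_filter[OF finite_cc_outputs, symmetric] cc_outputs_within[OF assms(4)])
  also have "\<dots> = log 2 C - (1 / K) * (\<Sum>ys\<in>?Ys. log 2 (b (card (set ys))))"
    using \<open>0 < K\<close> \<open>finite x\<close> \<open>card x = k\<close>
    by (simp add: diff_divide_distrib sum_subtractf sum_divide_distrib[symmetric]
        card_lists_length_eq K_def)
  also have "(\<Sum>ys\<in>?Ys. log 2 (b (card (set ys))))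
      = (\<Sum>l\<le>k. real (k choose l) * real (Stirling R l) * fact l * log 2 (b l))"
    using sum_lists_by_card_set[OF \<open>finite x\<close>] \<open>card x = k\<close> by simp
  also have "\<dots> = (\<Sum>l=1..min k R. real (k choose l) * real (Stirling R l) * fact l * log 2 (b l))"
    using assms(3) by (intro sum.mono_neutral_right) (auto simp: Stirling_0_right not_le)
  finally show ?thesis by (simp add: C_def K_def b_def)
qed

theorem theorem1:
  fixes n k R :: nat
  assumes "0 < k" and "k < n" and "0 < R"
  shows "cc_capacity n k R =
           log 2 (real (n choose k))
           - (1 / real k ^ R) * (\<Sum>l=1..min k R.
                real (k choose l) * real (Stirling R l) * fact l
                * log 2 (real ((n - l) choose (k - l))))
       \<and> cc_input_dist n k (cc_uniform n k)
       \<and> cc_mutual_info n k R (cc_uniform n k) = cc_capacity n k R"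
  (is "_ = ?V \<and> _")
proof -
  let ?X = "cc_inputs n k" and ?Y = "cc_outputs n R" and ?W = "cc_trans k R"
  have uniform: "cc_input_dist n k (cc_uniform n k)"
    using assms by (simp add: cc_input_dist_uniform)
  have const: "\<And>x. x \<in> ?X \<Longrightarrow> rel_entropy ?Y (?W x) (output_prob ?X ?W (cc_uniform n k)) = ?V"
    using rel_entropy_cc_trans_uniform assms by (simp add: cc_out_prob_eq_output_prob)
  have attained: "cc_mutual_info n k R (cc_uniform n k) = ?V"
    using uniform const unfolding cc_input_dist_def cc_mutual_info_eq_mutual_information
    by (blast intro: mutual_information_eq_if_rel_entropy_const)
  have bounded: "cc_mutual_info n k R p \<le> ?V" if "cc_input_dist n k p" for p
    unfolding cc_mutual_info_eq_mutual_information
  proof (rule mutual_information_le_if_rel_entropy_const[OF finite_cc_inputs finite_cc_outputs])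
    show "\<And>x. x \<in> ?X \<Longrightarrow> 0 < cc_uniform n k x"
      using assms by (simp add: cc_uniform_def)
  qed (use that uniform const sum_cc_trans assms in \<open>auto simp: cc_input_dist_def cc_trans_def\<close>)
  have "cc_capacity n k R = ?V"
    unfolding cc_capacity_def
  proof (rule cSup_eq_maximum)
    show "?V \<in> cc_mutual_info n k R ` {p. cc_input_dist n k p}"
      using uniform attained by (intro rev_image_eqI[of "cc_uniform n k"]) auto
  qed (use bounded in auto)
  with uniform attained show ?thesis by simp
qed

end
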